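(* Let $(M,\mathcal{H},\langle\cdot,\cdot\rangle)$ be a quaternionic contact manifold of dimension $4n+3$, and let $\{X_1,\dots,X_{4n},V_1,V_2,V_3\}$ be a local $g$-orthonormal frame such that $\{X_1,\dots,X_{4n}\}$ is an $Sp(n)Sp(1)$-frame and $V_1,V_2,V_3$ are the Reeb vector fields; write $X_{4n+i}:=V_i$ and let $\{\theta_1,\dots,\theta_{4n+3}\}$ be the dual coframe. Then the intrinsic sublaplacian (the sublaplacian associated with the Popp measure) is locally $$\Delta_{sub}=-\sum_{\alpha=1}^{4n}\Big(X_\alpha^2+\Big(\sum_{a=1}^{4n+3}c^a_{a\alpha}\Big)X_\alpha\Big),\qquad c^a_{a\alpha}:=\theta_a([X_a,X_\alpha]).$$
   Context: A quaternionic contact (qc) manifold $(M,\mathcal{H},\langle\cdot,\cdot\rangle)$ is a connected orientable manifold of dimension $4n+3$ with a corank-3 distribution $\mathcal{H}$ and a smooth fiberwise inner product on $\mathcal{H}$ such that locally $\mathcal{H}=\bigcap_{i=1}^3\ker\eta_i$ for 1-forms $\eta_i$, and there are almost complex structures $I_1,I_2,I_3$ on $\mathcal{H}$ with $I_i^2=I_1I_2I_3=-\mathrm{Id}$ and $2\langle I_iX,Y\rangle=d\eta_i(X,Y)$ for horizontal $X,Y$. Reeb vector fields: $\eta_i(V_j)=\delta_{ij}$, $(V_i\lrcorner d\eta_j)|_{\mathcal{H}}=-(V_j\lrcorner d\eta_i)|_{\mathcal{H}}$ (assumed to exist if $n=1$). $g=\langle\cdot,\cdot\rangle\oplus(\eta_1^2+\eta_2^2+\eta_3^2)$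 with $\mathcal{H}\perp\mathrm{span}\{V_i\}$. An $Sp(n)Sp(1)$-frame is an orthonormal frame of $\mathcal{H}$ with $I_iX_{4k+1}=X_{4k+i+1}$. For a smooth measure $\mu$, $\mathrm{div}_\mu X$ is defined by $\mathcal{L}_X\mu=(\mathrm{div}_\mu X)\mu$, and the sublaplacian is $\Delta^\mu_{sub}f=-\mathrm{div}_\mu(\nabla_{\mathcal{H}}f)$, $\nabla_{\mathcal{H}}$ the horizontal gradient. The Popp measure in such a frame is $\frac{1}{\sqrt{\det B}}\theta_1\wedge\cdots\wedge\theta_{4n+3}$ with $B_{ij}=\sum_{\alpha,\beta}\eta_i([X_\alpha,X_\beta])\eta_j([X_\alpha,X_\beta])$; the intrinsic sublaplacian is $\Delta^\mu_{sub}$ with $\mu$ the Popp measure. *)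

theory Defs
  imports "HOL-Analysis.Analysis"
begin

text \<open>Local (chart) setting: a frame domain is an open set U of real^'m, CARD('m) = 4n+3.
  Tangent vectors are elements of real^'m; a 1-form is represented by a covector field
  eta :: real^'m => real^'m, acting by eta x \<bullet> v.\<close>

fun Ck :: "nat \<Rightarrow> 'a::real_normed_vector set \<Rightarrow> ('a \<Rightarrow> 'b::real_normed_vector) \<Rightarrow> bool" where
  "Ck 0 U f = continuous_on U f"
| "Ck (Suc k) U f = ((\<forall>x\<in>U. f differentiable (at x)) \<and>
                      (\<forall>v. Ck k U (\<lambda>x. frechet_derivative f (at x) v)))"

definition smooth_on :: "'a::real_normed_vector set \<Rightarrow> ('a \<Rightarrow> 'b::real_normed_vector) \<Rightarrow> bool" where
  "smooth_on U f \<longleftrightarrow> (\<forall>k. Ck k U f)"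

definition vf_apply :: "('a::real_normed_vector \<Rightarrow> 'a) \<Rightarrow> ('a \<Rightarrow> 'b::real_normed_vector) \<Rightarrow> 'a \<Rightarrow> 'b" where
  "vf_apply X f x = frechet_derivative f (at x) (X x)"

definition lie_bracket :: "('a::real_normed_vector \<Rightarrow> 'a) \<Rightarrow> ('a \<Rightarrow> 'a) \<Rightarrow> 'a \<Rightarrow> 'a" where
  "lie_bracket X Y x = frechet_derivative Y (at x) (X x) - frechet_derivative X (at x) (Y x)"

text \<open>Exterior derivative of a 1-form eta at x evaluated on tangent vectors v, w:
  d eta(v,w) = (D eta(v)) . w - (D eta(w)) . v, i.e. d eta(X,Y) = X eta(Y) - Y eta(X) - eta([X,Y]).\<close>
definition d_form :: "(real^'n::finite \<Rightarrow> real^'n) \<Rightarrow> real^'n \<Rightarrow> real^'n \<Rightarrow> real^'n \<Rightarrow> real" where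
  "d_form eta x v w = frechet_derivative eta (at x) v \<bullet> w - frechet_derivative eta (at x) w \<bullet> v"

definition horiz :: "(nat \<Rightarrow> real^'n::finite \<Rightarrow> real^'n) \<Rightarrow> real^'n \<Rightarrow> (real^'n) set" where
  "horiz eta x = {v. \<forall>i\<in>{1,2,3::nat}. eta i x \<bullet> v = 0}"

definition hgrad :: "(nat \<Rightarrow> real^'n::finite \<Rightarrow> real^'n) \<Rightarrow> (real^'n \<Rightarrow> real^'n \<Rightarrow> real^'n \<Rightarrow> real)
     \<Rightarrow> (real^'n \<Rightarrow> real) \<Rightarrow> real^'n \<Rightarrow> real^'n" where
  "hgrad eta ip f x = (THE w. w \<in> horiz eta x \<and>
       (\<forall>v\<in>horiz eta x. ip x w v = frechet_derivative f (at x) v))"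

text \<open>Divergence with respect to the smooth measure rho(x) dx (rho > 0 a density w.r.t. the
  coordinate volume): this is the coordinate expression of L_Y mu = (div_mu Y) mu.\<close>
definition divergence :: "(real^'n::finite \<Rightarrow> real) \<Rightarrow> (real^'n \<Rightarrow> real^'n) \<Rightarrow> real^'n \<Rightarrow> real" where
  "divergence rho Y x = (1 / rho x) *
      (\<Sum>i\<in>UNIV. frechet_derivative (\<lambda>y. rho y * Y y $ i) (at x) (axis i 1))"

definition sublaplacian :: "(real^'n::finite \<Rightarrow> real) \<Rightarrow> (nat \<Rightarrow> real^'n \<Rightarrow> real^'n)
     \<Rightarrow> (real^'n \<Rightarrow> real^'n \<Rightarrow> real^'n \<Rightarrow> real) \<Rightarrow> (real^'n \<Rightarrow> real) \<Rightarrow> real^'n \<Rightarrow> real" where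
  "sublaplacian rho eta ip f x = - divergence rho (hgrad eta ip f) x"

definition popp_B :: "nat \<Rightarrow> (nat \<Rightarrow> real^'n::finite \<Rightarrow> real^'n) \<Rightarrow> (nat \<Rightarrow> real^'n \<Rightarrow> real^'n)
     \<Rightarrow> real^'n \<Rightarrow> nat \<Rightarrow> nat \<Rightarrow> real" where
  "popp_B n eta X x i j = (\<Sum>\<alpha>\<in>{1..4*n}. \<Sum>\<beta>\<in>{1..4*n}.
      (eta i x \<bullet> lie_bracket (X \<alpha>) (X \<beta>) x) * (eta j x \<bullet> lie_bracket (X \<alpha>) (X \<beta>) x))"

definition det3 :: "(nat \<Rightarrow> nat \<Rightarrow> real) \<Rightarrow> real" where
  "det3 B = B 1 1 * (B 2 2 * B 3 3 - B 2 3 * B 3 2)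
          - B 1 2 * (B 2 1 * B 3 3 - B 2 3 * B 3 1)
          + B 1 3 * (B 2 1 * B 3 2 - B 2 2 * B 3 1)"

text \<open>Density (w.r.t. coordinate Lebesgue measure) of the Popp measure
  (1/sqrt(det B)) theta_1 \<and> ... \<and> theta_{4n+3}; the coordinate expression of
  theta_1 \<and>...\<and> theta_N is det(theta_a(e_i)) dx, where iota enumerates the coordinates
  ('m) by 1..N; as a measure we take the absolute value.\<close>
definition popp_density :: "nat \<Rightarrow> ('n::finite \<Rightarrow> nat) \<Rightarrow> (nat \<Rightarrow> real^'n \<Rightarrow> real^'n)
     \<Rightarrow> (nat \<Rightarrow> real^'n \<Rightarrow> real^'n) \<Rightarrow> (nat \<Rightarrow> real^'n \<Rightarrow> real^'n) \<Rightarrow> real^'n \<Rightarrow> real" where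
  "popp_density n iota theta eta X x =
     \<bar>det (\<chi> r c. theta (iota r) x $ c)\<bar> / sqrt (det3 (popp_B n eta X x))"

end

theory Submission
  imports Defs
begin

(* The Popp matrix is constant. For horizontal X, Y the compatibility condition gives
   2 <I_i X, Y> = d eta_i (X, Y) = - eta_i ([X, Y]), so by Parseval in the horizontal frame
   B_ij = 4 sum_alpha <I_i X_alpha, I_j X_alpha> = 16 n delta_ij, because I_1 v, I_2 v, I_3 v are
   orthogonal of the same length as v. Hence the Popp measure is a constant multiple of
   |theta_1 ^ ... ^ theta_(4n+3)|, whose density in coordinates is |det Theta| for the
   coframe matrix Theta. By Jacobi's formula, differentiating |det Theta| along X_alpha gives
   - sum_a theta_a (D X_a (X_alpha)), while the coordinate divergence of X_alpha is
   sum_a theta_a (D X_alpha (X_a)); together they add up to sum_a theta_a ([X_a, X_alpha]).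
   Since the horizontal gradient of f is sum_alpha (X_alpha f) X_alpha, the product rule for
   the divergence gives the formula. *)

lemma smooth_on_imp_differentiable:
  "smooth_on U F \<Longrightarrow> x \<in> U \<Longrightarrow> F differentiable (at x)"
  unfolding smooth_on_def by (metis Ck.simps(2))

lemma smooth_on_imp_frechet_derivative_differentiable:
  "smooth_on U F \<Longrightarrow> x \<in> U \<Longrightarrow> (\<lambda>y. frechet_derivative F (at y) v) differentiable (at x)"
  unfolding smooth_on_def by (metis Ck.simps(2) numeral_2_eq_2)

lemma has_derivative_eq_0_if_constant_on_open:
  assumes "open U" "x \<in> U" "\<And>y. y \<in> U \<Longrightarrow> F y = c" "(F has_derivative F') (at x)"
  shows "F' h = 0"
proof -
  have "(F has_derivative (\<lambda>h. 0)) (at x)"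
    by (rule has_derivative_transform_within_open[OF _ assms(1,2)]) (auto simp: assms(3))
  then show ?thesis using has_derivative_unique[OF assms(4)] by metis
qed

lemma linear_axis_expansion:
  "linear L \<Longrightarrow> L (x::real^'n) = (\<Sum>i\<in>UNIV. x$i *\<^sub>R L (axis i 1))"
proof -
  assume L: "linear L"
  have "x = (\<Sum>i\<in>UNIV. x$i *\<^sub>R axis i (1::real))"
    using basis_expansion[of x] by (simp add: scalar_mult_eq_scaleR)
  then have "L x = L (\<Sum>i\<in>UNIV. x$i *\<^sub>R axis i (1::real))" by simp
  also have "\<dots> = (\<Sum>i\<in>UNIV. x$i *\<^sub>R L (axis i 1))"
    using L by (simp add: linear_sum linear_scale)
  finally show ?thesis .
qed

lemma trace_matrix_eq: "trace (matrix L) = (\<Sum>i\<in>UNIV. L (axis i 1) $ i)"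
  by (simp add: trace_def matrix_def)

lemma divergence_eq_trace_plus_log_derivative:
  assumes rho: "(\<rho> has_derivative D\<rho>) (at x)" and Y: "(Y has_derivative DY) (at x)"
    and nz: "\<rho> x \<noteq> 0"
  shows "divergence \<rho> Y x = trace (matrix DY) + D\<rho> (Y x) / \<rho> x"
proof -
  have prod: "((\<lambda>y. \<rho> y * Y y $ i) has_derivative (\<lambda>h. \<rho> x * DY h $ i + D\<rho> h * Y x $ i)) (at x)" for i
    by (rule has_derivative_mult[OF rho bounded_linear.has_derivative[OF bounded_linear_vec_nth Y]])
  have "frechet_derivative (\<lambda>y. \<rho> y * Y y $ i) (at x) (axis i 1)
      = \<rho> x * DY (axis i 1) $ i + D\<rho> (axis i 1) * Y x $ i" for i
    using fun_cong[OF frechet_derivative_at[OF prod[of i]], of "axis i 1"] by simp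
  moreover have "(\<Sum>i\<in>UNIV. D\<rho> (axis i 1) * Y x $ i) = D\<rho> (Y x)"
    using linear_axis_expansion[OF has_derivative_linear[OF rho], of "Y x"] by (simp add: mult.commute)
  ultimately show ?thesis
    using nz by (simp add: divergence_def trace_matrix_eq sum.distrib sum_distrib_left field_simps)
qed

lemma vf_apply_differentiable:
  assumes "open U" "x \<in> U" and X: "X differentiable (at x)"
    and f: "\<And>y. y \<in> U \<Longrightarrow> f differentiable (at y)"
    and Df: "\<And>v. (\<lambda>y. frechet_derivative f (at y) v) differentiable (at x)"
  shows "vf_apply X (f :: real^'n \<Rightarrow> real) differentiable (at x)"
proof -
  define R where "R y = (\<Sum>j\<in>UNIV. X y $ j * frechet_derivative f (at y) (axis j 1))" for y
  have eq: "vf_apply X f y = R y" if "y \<in> U" for y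
    using linear_axis_expansion[OF linear_frechet_derivative[OF f[OF that]], of "X y"]
    by (simp add: vf_apply_def R_def)
  have "(\<lambda>y. X y $ j) differentiable (at x)" for j
    using X unfolding differentiable_def
    by (blast intro: bounded_linear.has_derivative[OF bounded_linear_vec_nth])
  then have "R differentiable (at x)"
    unfolding R_def using Df by (intro differentiable_sum differentiable_mult) auto
  then obtain D where "(R has_derivative D) (at x)"
    by (auto simp: differentiable_def)
  then have "(vf_apply X f has_derivative D) (at x)"
    by (rule has_derivative_transform_within_open[OF _ assms(1,2)]) (simp add: eq)
  then show ?thesis by (auto simp: differentiable_def)
qed

lemma has_derivative_det:
  fixes M :: "'a::real_normed_vector \<Rightarrow> real^'n^'n"
  assumes d: "\<And>i j. ((\<lambda>y. M y $ i $ j) has_derivative D i j) (at x)"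
  shows "((\<lambda>y. det (M y)) has_derivative
     (\<lambda>v. \<Sum>k\<in>UNIV. det (\<chi> i. if i = k then (\<chi> j. D k j v) else M x $ i))) (at x)"
proof -
  let ?P = "{p. p permutes (UNIV::'n set)}"
  have "((\<lambda>y. det (M y)) has_derivative
     (\<lambda>v. \<Sum>p\<in>?P. of_int (sign p) *
          (\<Sum>k\<in>UNIV. D k (p k) v * (\<Prod>j\<in>UNIV - {k}. M x $ j $ p j)))) (at x)"
    unfolding det_def
    by (intro has_derivative_sum has_derivative_mult_right has_derivative_prod d)
  moreover have "(\<Sum>p\<in>?P. of_int (sign p) *
          (\<Sum>k\<in>UNIV. D k (p k) v * (\<Prod>j\<in>UNIV - {k}. M x $ j $ p j)))
      = (\<Sum>k\<in>UNIV. det (\<chi> i. if i = k then (\<chi> j. D k j v) else M x $ i))" for v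
  proof -
    have row: "(\<Prod>i\<in>UNIV. (\<chi> i. if i = k then (\<chi> j. D k j v) else M x $ i) $ i $ p i)
           = D k (p k) v * (\<Prod>j\<in>UNIV - {k}. M x $ j $ p j)" for k p
      by (subst prod.remove[of _ k]) (auto intro!: prod.cong)
    have "(\<Sum>p\<in>?P. of_int (sign p) *
          (\<Sum>k\<in>UNIV. D k (p k) v * (\<Prod>j\<in>UNIV - {k}. M x $ j $ p j)))
      = (\<Sum>k\<in>UNIV. \<Sum>p\<in>?P. of_int (sign p) *
          (D k (p k) v * (\<Prod>j\<in>UNIV - {k}. M x $ j $ p j)))"
      by (simp add: sum_distrib_left sum.swap[where A="?P"])
    then show ?thesis
      unfolding det_def row by (simp add: mult.assoc)
  qed
  ultimately show ?thesis by simp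
qed

lemma det_replace_row:
  fixes A N :: "real^'n^'n"
  assumes "N ** A = mat 1"
  shows "det (\<chi> i. if i = k then h else A $ i) = (h \<bullet> column k N) * det A"
proof -
  define c where "c = (\<chi> s. h \<bullet> column s N)"
  have "(\<Sum>s\<in>UNIV. c$s * A $ s $ l) = h $ l" for l
  proof -
    have "(\<Sum>s\<in>UNIV. c$s * A $ s $ l) = (\<Sum>s\<in>UNIV. \<Sum>t\<in>UNIV. h $ t * N $ t $ s * A $ s $ l)"
      by (simp add: c_def inner_vec_def column_def sum_distrib_right)
    also have "\<dots> = (\<Sum>t\<in>UNIV. h $ t * (N ** A) $ t $ l)"
      by (subst sum.swap) (simp add: matrix_matrix_mult_def sum_distrib_left mult.assoc)
    also have "\<dots> = h $ l"
      using assms by (simp add: mat_def if_distrib cong: if_cong)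
    finally show ?thesis .
  qed
  then have h: "(\<Sum>s\<in>UNIV. c$s *s row s A) = h"
    by (simp add: vec_eq_iff sum_component row_def)
  have "det (\<chi> i. if i = k then h else A $ i)
      = det (\<chi> i. if i = k then (\<Sum>s\<in>UNIV. c$s *s row s A) else row i A)"
    unfolding h by (rule arg_cong[where f=det]) (simp add: row_def vec_eq_iff)
  also have "\<dots> = c$k * det A" by (rule cramer_lemma_transpose)
  finally show ?thesis by (simp add: c_def)
qed

lemma has_derivative_det_left_inverse:
  fixes M :: "'a::real_normed_vector \<Rightarrow> real^'n^'n"
  assumes d: "\<And>i j. ((\<lambda>y. M y $ i $ j) has_derivative D i j) (at x)"
    and inv: "N ** M x = mat 1"
  shows "((\<lambda>y. det (M y)) has_derivative
     (\<lambda>v. det (M x) * (\<Sum>k\<in>UNIV. (\<chi> j. D k j v) \<bullet> column k N))) (at x)"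
  using has_derivative_det[OF d]
  by (simp add: det_replace_row[OF inv] sum_distrib_left mult.commute)

locale dual_frame =
  fixes U :: "(real^'m::finite) set" and A :: "nat set" and iota :: "'m \<Rightarrow> nat"
    and X theta :: "nat \<Rightarrow> real^'m \<Rightarrow> real^'m"
  assumes open_U: "open U"
    and iota_bij: "bij_betw iota UNIV A"
    and X_differentiable: "\<And>a x. a \<in> A \<Longrightarrow> x \<in> U \<Longrightarrow> X a differentiable (at x)"
    and theta_differentiable: "\<And>a x. a \<in> A \<Longrightarrow> x \<in> U \<Longrightarrow> theta a differentiable (at x)"
    and theta_X: "\<And>a b x. x \<in> U \<Longrightarrow> a \<in> A \<Longrightarrow> b \<in> A \<Longrightarrow>
      theta a x \<bullet> X b x = (if a = b then 1 else 0)"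
begin

(* Its determinant is the coordinate density of theta_1 ^ ... ^ theta_N, the coordinates
   being enumerated by iota. *)
definition coframe_matrix :: "real^'m \<Rightarrow> real^'m^'m" where
  "coframe_matrix x = (\<chi> r c. theta (iota r) x $ c)"

definition frame_matrix :: "real^'m \<Rightarrow> real^'m^'m" where
  "frame_matrix x = (\<chi> r c. X (iota c) x $ r)"

lemma finite_A: "finite A"
  using bij_betw_finite[OF iota_bij] by simp

lemma coframe_matrix_mult_frame_matrix:
  assumes "x \<in> U" shows "coframe_matrix x ** frame_matrix x = mat 1"
proof -
  have "iota r \<in> A" "iota r = iota c \<longleftrightarrow> r = c" for r c
    using iota_bij by (auto simp: bij_betw_def inj_on_def)
  then show ?thesis
    using theta_X[OF assms]
    by (simp add: coframe_matrix_def frame_matrix_def matrix_matrix_mult_def mat_def vec_eq_iff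
        inner_vec_def)
qed

lemma frame_matrix_mult_coframe_matrix: "x \<in> U \<Longrightarrow> frame_matrix x ** coframe_matrix x = mat 1"
  using coframe_matrix_mult_frame_matrix matrix_left_right_inverse by blast

lemma det_coframe_matrix_nonzero: "x \<in> U \<Longrightarrow> det (coframe_matrix x) \<noteq> 0"
  using coframe_matrix_mult_frame_matrix det_mul[of "coframe_matrix x" "frame_matrix x"]
  by (metis det_I mult_zero_left zero_neq_one)

lemma frame_completeness:
  assumes "x \<in> U" shows "(\<Sum>a\<in>A. X a x $ i * theta a x $ k) = (if i = k then 1 else 0)"
proof -
  have "(\<Sum>r\<in>UNIV. X (iota r) x $ i * theta (iota r) x $ k) = (if i = k then 1 else 0)"
    using frame_matrix_mult_coframe_matrix[OF assms]
    by (simp add: frame_matrix_def coframe_matrix_def matrix_matrix_mult_def mat_def vec_eq_iff)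
  then show ?thesis
    using sum.reindex_bij_betw[OF iota_bij, of "\<lambda>a. X a x $ i * theta a x $ k"] by simp
qed

lemma frame_expansion:
  assumes "x \<in> U" shows "(\<Sum>a\<in>A. (theta a x \<bullet> v) *\<^sub>R X a x) = v"
proof -
  have "(\<Sum>a\<in>A. (theta a x \<bullet> v) *\<^sub>R X a x) $ i
      = (\<Sum>k\<in>UNIV. v $ k * (\<Sum>a\<in>A. X a x $ i * theta a x $ k))" for i
    by (simp add: sum_component inner_vec_def sum_distrib_left sum_distrib_right mult_ac
        sum.swap[of _ A])
  then show ?thesis
    by (simp add: frame_completeness[OF assms] vec_eq_iff if_distrib cong: if_cong)
qed

lemma trace_eq_frame_sum:
  assumes "x \<in> U" "linear L"
  shows "trace (matrix L) = (\<Sum>a\<in>A. theta a x \<bullet> L (X a x))"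
proof -
  have "(\<Sum>a\<in>A. theta a x \<bullet> L (X a x))
      = (\<Sum>a\<in>A. \<Sum>k\<in>UNIV. \<Sum>i\<in>UNIV. L (axis i 1) $ k * (X a x $ i * theta a x $ k))"
    by (subst linear_axis_expansion[OF assms(2)])
       (simp add: inner_sum_right inner_vec_def sum_distrib_left mult_ac)
  also have "\<dots> = (\<Sum>k\<in>UNIV. \<Sum>i\<in>UNIV. \<Sum>a\<in>A. L (axis i 1) $ k * (X a x $ i * theta a x $ k))"
    by (subst sum.swap) (simp add: sum.swap[of _ A])
  also have "\<dots> = (\<Sum>k\<in>UNIV. \<Sum>i\<in>UNIV. L (axis i 1) $ k * (\<Sum>a\<in>A. X a x $ i * theta a x $ k))"
    by (simp add: sum_distrib_left)
  also have "\<dots> = trace (matrix L)"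
    by (simp add: frame_completeness[OF assms(1)] trace_matrix_eq if_distrib cong: if_cong)
  finally show ?thesis by (rule sym)
qed

lemma frechet_derivative_theta_X:
  assumes "x \<in> U" "a \<in> A"
  shows "frechet_derivative (theta a) (at x) v \<bullet> X a x
    = - (theta a x \<bullet> frechet_derivative (X a) (at x) v)"
proof -
  have "((\<lambda>y. theta a y \<bullet> X a y) has_derivative
      (\<lambda>v. theta a x \<bullet> frechet_derivative (X a) (at x) v
          + frechet_derivative (theta a) (at x) v \<bullet> X a x)) (at x)"
    using assms by (intro has_derivative_inner frechet_derivative_works[THEN iffD1]
        X_differentiable theta_differentiable)
  from has_derivative_eq_0_if_constant_on_open[OF open_U assms(1) _ this, of 1]
  have "theta a x \<bullet> frechet_derivative (X a) (at x) v
      + frechet_derivative (theta a) (at x) v \<bullet> X a x = 0"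
    using theta_X assms by simp
  then show ?thesis by linarith
qed

lemma has_derivative_det_coframe_matrix:
  assumes x: "x \<in> U"
  shows "((\<lambda>y. det (coframe_matrix y)) has_derivative
     (\<lambda>v. - det (coframe_matrix x) *
        (\<Sum>a\<in>A. theta a x \<bullet> frechet_derivative (X a) (at x) v))) (at x)"
proof -
  have iota_A: "iota r \<in> A" for r
    using iota_bij by (auto simp: bij_betw_def)
  have "((\<lambda>y. coframe_matrix y $ r $ c) has_derivative
      (\<lambda>v. frechet_derivative (theta (iota r)) (at x) v $ c)) (at x)" for r c
    unfolding coframe_matrix_def using x iota_A
    by (auto intro!: bounded_linear.has_derivative[OF bounded_linear_vec_nth]
        frechet_derivative_works[THEN iffD1] theta_differentiable)
  from has_derivative_det_left_inverse[OF this frame_matrix_mult_coframe_matrix[OF x]]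
  have "((\<lambda>y. det (coframe_matrix y)) has_derivative
      (\<lambda>v. det (coframe_matrix x) *
        (\<Sum>r\<in>UNIV. frechet_derivative (theta (iota r)) (at x) v \<bullet> X (iota r) x))) (at x)"
    by (simp add: column_def frame_matrix_def vec_lambda_eta)
  moreover have "(\<Sum>r\<in>UNIV. frechet_derivative (theta (iota r)) (at x) v \<bullet> X (iota r) x)
      = - (\<Sum>a\<in>A. theta a x \<bullet> frechet_derivative (X a) (at x) v)" for v
    using sum.reindex_bij_betw[OF iota_bij, of "\<lambda>a. frechet_derivative (theta a) (at x) v \<bullet> X a x"]
    by (simp add: frechet_derivative_theta_X[OF x] sum_negf)
  ultimately show ?thesis by simp
qed

lemma has_derivative_abs_det_coframe_matrix:
  assumes x: "x \<in> U"
  shows "((\<lambda>y. \<bar>det (coframe_matrix y)\<bar>) has_derivative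
     (\<lambda>v. - \<bar>det (coframe_matrix x)\<bar> *
        (\<Sum>a\<in>A. theta a x \<bullet> frechet_derivative (X a) (at x) v))) (at x)"
proof -
  let ?d = "det (coframe_matrix x)"
  let ?S = "\<lambda>v. \<Sum>a\<in>A. theta a x \<bullet> frechet_derivative (X a) (at x) v"
  have "(norm has_derivative (\<lambda>h. h * sgn ?d)) (at ?d)"
    using has_derivative_norm[OF det_coframe_matrix_nonzero[OF x]] by simp
  from has_derivative_compose[OF has_derivative_det_coframe_matrix[OF x] this]
  have "((\<lambda>y. \<bar>det (coframe_matrix y)\<bar>) has_derivative (\<lambda>v. (- ?d * ?S v) * sgn ?d)) (at x)"
    by simp
  moreover have "(\<lambda>v. (- ?d * ?S v) * sgn ?d) = (\<lambda>v. - \<bar>?d\<bar> * ?S v)"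
    by (rule ext) (simp add: sgn_if)
  ultimately show ?thesis by simp
qed

lemma has_derivative_coframe_density:
  assumes x: "x \<in> U" and rho: "\<And>y. y \<in> U \<Longrightarrow> \<rho> y = c * \<bar>det (coframe_matrix y)\<bar>"
  shows "(\<rho> has_derivative
     (\<lambda>v. - \<rho> x * (\<Sum>a\<in>A. theta a x \<bullet> frechet_derivative (X a) (at x) v))) (at x)"
proof -
  have "((\<lambda>y. c * \<bar>det (coframe_matrix y)\<bar>) has_derivative
      (\<lambda>v. - \<rho> x * (\<Sum>a\<in>A. theta a x \<bullet> frechet_derivative (X a) (at x) v))) (at x)"
    using has_derivative_mult_right[OF has_derivative_abs_det_coframe_matrix[OF x], of c]
    by (simp add: rho[OF x] mult.assoc)
  then show ?thesis
    by (rule has_derivative_transform_within_open[OF _ open_U x]) (simp add: rho)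
qed

context
  fixes x S g Y
  assumes x: "x \<in> U" and S: "S \<subseteq> A" and g: "\<And>\<alpha>. \<alpha> \<in> S \<Longrightarrow> g \<alpha> differentiable (at x)"
    and Y: "\<And>y. y \<in> U \<Longrightarrow> Y y = (\<Sum>\<alpha>\<in>S. g \<alpha> y *\<^sub>R X \<alpha> y)"
begin

lemma has_derivative_frame_sum:
  "(Y has_derivative (\<lambda>h. \<Sum>\<alpha>\<in>S. g \<alpha> x *\<^sub>R frechet_derivative (X \<alpha>) (at x) h
                              + frechet_derivative (g \<alpha>) (at x) h *\<^sub>R X \<alpha> x)) (at x)"
proof -
  have "((\<lambda>y. \<Sum>\<alpha>\<in>S. g \<alpha> y *\<^sub>R X \<alpha> y) has_derivative
      (\<lambda>h. \<Sum>\<alpha>\<in>S. g \<alpha> x *\<^sub>R frechet_derivative (X \<alpha>) (at x) h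
                 + frechet_derivative (g \<alpha>) (at x) h *\<^sub>R X \<alpha> x)) (at x)"
    using S x g by (intro has_derivative_sum has_derivative_scaleR
        frechet_derivative_works[THEN iffD1] X_differentiable) auto
  then show ?thesis
    by (rule has_derivative_transform_within_open[OF _ open_U x]) (simp add: Y)
qed

lemma trace_derivative_frame_sum:
  "trace (matrix (frechet_derivative Y (at x)))
     = (\<Sum>\<alpha>\<in>S. g \<alpha> x * (\<Sum>a\<in>A. theta a x \<bullet> frechet_derivative (X \<alpha>) (at x) (X a x))
                 + vf_apply (X \<alpha>) (g \<alpha>) x)"
proof -
  let ?DY = "frechet_derivative Y (at x)"
  have DY: "(Y has_derivative ?DY) (at x)"
    by (rule frechet_derivative_works[THEN iffD1, OF differentiableI[OF has_derivative_frame_sum]])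
  have "trace (matrix ?DY) = (\<Sum>a\<in>A. theta a x \<bullet> ?DY (X a x))"
    using trace_eq_frame_sum[OF x has_derivative_linear[OF DY]] .
  also have "\<dots> = (\<Sum>\<alpha>\<in>S. g \<alpha> x * (\<Sum>a\<in>A. theta a x \<bullet> frechet_derivative (X \<alpha>) (at x) (X a x))
      + (\<Sum>a\<in>A. vf_apply (X a) (g \<alpha>) x * (theta a x \<bullet> X \<alpha> x)))"
    by (simp add: frechet_derivative_at[OF has_derivative_frame_sum, symmetric] vf_apply_def
        inner_add_right inner_sum_right sum.distrib sum_distrib_left sum.swap[of _ A])
  also have "\<dots> = (\<Sum>\<alpha>\<in>S. g \<alpha> x * (\<Sum>a\<in>A. theta a x \<bullet> frechet_derivative (X \<alpha>) (at x) (X a x))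
      + vf_apply (X \<alpha>) (g \<alpha>) x)"
    using S finite_A by (intro sum.cong) (auto simp: theta_X[OF x] if_distrib cong: if_cong)
  finally show ?thesis .
qed

lemma coframe_derivative_frame_sum:
  "(\<Sum>a\<in>A. theta a x \<bullet> frechet_derivative (X a) (at x) (Y x))
     = (\<Sum>\<alpha>\<in>S. g \<alpha> x * (\<Sum>a\<in>A. theta a x \<bullet> frechet_derivative (X a) (at x) (X \<alpha> x)))"
proof -
  have "frechet_derivative (X a) (at x) (Y x)
      = (\<Sum>\<alpha>\<in>S. g \<alpha> x *\<^sub>R frechet_derivative (X a) (at x) (X \<alpha> x))" if "a \<in> A" for a
    using linear_frechet_derivative[OF X_differentiable[OF that x]] Y[OF x]
    by (simp add: linear_sum linear_scale)
  then show ?thesis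
    by (simp add: inner_sum_right sum_distrib_left sum.swap[of _ A])
qed

lemma divergence_frame_sum:
  assumes c: "c \<noteq> 0" and rho: "\<And>y. y \<in> U \<Longrightarrow> \<rho> y = c * \<bar>det (coframe_matrix y)\<bar>"
  shows "divergence \<rho> Y x = (\<Sum>\<alpha>\<in>S. vf_apply (X \<alpha>) (g \<alpha>) x
           + (\<Sum>a\<in>A. theta a x \<bullet> lie_bracket (X a) (X \<alpha>) x) * g \<alpha> x)"
proof -
  have DY: "(Y has_derivative frechet_derivative Y (at x)) (at x)"
    by (rule frechet_derivative_works[THEN iffD1, OF differentiableI[OF has_derivative_frame_sum]])
  have "\<rho> x \<noteq> 0"
    using rho[OF x] c det_coframe_matrix_nonzero[OF x] by simp
  then have "divergence \<rho> Y x = trace (matrix (frechet_derivative Y (at x)))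
      - (\<Sum>a\<in>A. theta a x \<bullet> frechet_derivative (X a) (at x) (Y x))"
    using divergence_eq_trace_plus_log_derivative[OF has_derivative_coframe_density[OF x rho] DY]
    by simp
  also have "\<dots> = (\<Sum>\<alpha>\<in>S. vf_apply (X \<alpha>) (g \<alpha>) x + (\<Sum>a\<in>A. theta a x \<bullet>
      (frechet_derivative (X \<alpha>) (at x) (X a x) - frechet_derivative (X a) (at x) (X \<alpha> x))) * g \<alpha> x)"
    unfolding trace_derivative_frame_sum coframe_derivative_frame_sum
    by (simp add: inner_diff_right sum_subtractf sum.distrib[symmetric] algebra_simps)
  finally show ?thesis
    by (simp add: lie_bracket_def)
qed

end

end

lemma subspace_horiz: "subspace (horiz eta x)"
  by (auto simp: subspace_def horiz_def inner_add_right)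

locale qc_frame = dual_frame U "{1..4*n+3}" iota X theta
  for n :: nat and U :: "(real^'m::finite) set" and iota X theta +
  fixes eta :: "nat \<Rightarrow> real^'m \<Rightarrow> real^'m"
    and ip :: "real^'m \<Rightarrow> real^'m \<Rightarrow> real^'m \<Rightarrow> real"
    and I :: "nat \<Rightarrow> real^'m \<Rightarrow> real^'m \<Rightarrow> real^'m"
  assumes n_pos: "n \<ge> 1"
    and eta_differentiable: "\<And>i x. i \<in> {1,2,3} \<Longrightarrow> x \<in> U \<Longrightarrow> eta i differentiable (at x)"
    and ip_linear_left: "\<And>x u v w a b. x \<in> U \<Longrightarrow> u \<in> horiz eta x \<Longrightarrow> v \<in> horiz eta x \<Longrightarrow>
      w \<in> horiz eta x \<Longrightarrow> ip x (a *\<^sub>R u + b *\<^sub>R v) w = a * ip x u w + b * ip x v w"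
    and ip_sym: "\<And>x v w. x \<in> U \<Longrightarrow> v \<in> horiz eta x \<Longrightarrow> w \<in> horiz eta x \<Longrightarrow>
      ip x v w = ip x w v"
    and ip_pos: "\<And>x v. x \<in> U \<Longrightarrow> v \<in> horiz eta x \<Longrightarrow> v \<noteq> 0 \<Longrightarrow> ip x v v > 0"
    and I_linear: "\<And>x i v w a b. x \<in> U \<Longrightarrow> i \<in> {1,2,3} \<Longrightarrow> v \<in> horiz eta x \<Longrightarrow>
      w \<in> horiz eta x \<Longrightarrow> I i x (a *\<^sub>R v + b *\<^sub>R w) = a *\<^sub>R I i x v + b *\<^sub>R I i x w"
    and I_horiz: "\<And>x i v. x \<in> U \<Longrightarrow> i \<in> {1,2,3} \<Longrightarrow> v \<in> horiz eta x \<Longrightarrow>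
      I i x v \<in> horiz eta x"
    and I_I: "\<And>x i v. x \<in> U \<Longrightarrow> i \<in> {1,2,3} \<Longrightarrow> v \<in> horiz eta x \<Longrightarrow> I i x (I i x v) = - v"
    and I_1_2_3: "\<And>x v. x \<in> U \<Longrightarrow> v \<in> horiz eta x \<Longrightarrow> I 1 x (I 2 x (I 3 x v)) = - v"
    and d_eta_eq_ip_I: "\<And>x i v w. x \<in> U \<Longrightarrow> i \<in> {1,2,3} \<Longrightarrow> v \<in> horiz eta x \<Longrightarrow>
      w \<in> horiz eta x \<Longrightarrow> 2 * ip x (I i x v) w = d_form (eta i) x v w"
    and eta_reeb: "\<And>x i j. x \<in> U \<Longrightarrow> i \<in> {1,2,3} \<Longrightarrow> j \<in> {1,2,3} \<Longrightarrow>
      eta i x \<bullet> X (4*n+j) x = (if i = j then 1 else 0)"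
    and X_horiz: "\<And>x \<alpha>. x \<in> U \<Longrightarrow> \<alpha> \<in> {1..4*n} \<Longrightarrow> X \<alpha> x \<in> horiz eta x"
    and X_orthonormal: "\<And>x \<alpha> \<beta>. x \<in> U \<Longrightarrow> \<alpha> \<in> {1..4*n} \<Longrightarrow> \<beta> \<in> {1..4*n} \<Longrightarrow>
      ip x (X \<alpha> x) (X \<beta> x) = (if \<alpha> = \<beta> then 1 else 0)"
begin

abbreviation H :: "real^'m \<Rightarrow> (real^'m) set" where
  "H x \<equiv> horiz eta x"

lemma ip_scaleR_left: "x \<in> U \<Longrightarrow> u \<in> H x \<Longrightarrow> w \<in> H x \<Longrightarrow> ip x (a *\<^sub>R u) w = a * ip x u w"
  using ip_linear_left[of x u u w a 0] by simp

lemma ip_diff_left: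
  "x \<in> U \<Longrightarrow> u \<in> H x \<Longrightarrow> v \<in> H x \<Longrightarrow> w \<in> H x \<Longrightarrow> ip x (u - v) w = ip x u w - ip x v w"
  using ip_linear_left[of x u v w 1 "-1"] by simp

lemma ip_sum_scaleR_left:
  assumes x: "x \<in> U" and K: "finite K" and u: "\<And>k. k \<in> K \<Longrightarrow> u k \<in> H x" and w: "w \<in> H x"
  shows "ip x (\<Sum>k\<in>K. c k *\<^sub>R u k) w = (\<Sum>k\<in>K. c k * ip x (u k) w)"
  using K u
proof (induction K rule: finite_induct)
  case empty
  show ?case using ip_scaleR_left[OF x subspace_0[OF subspace_horiz] w, of 0] by simp
next
  case (insert k K)
  have "(\<Sum>k\<in>K. c k *\<^sub>R u k) \<in> H x"
    using insert by (intro subspace_sum[OF subspace_horiz] subspace_scale[OF subspace_horiz]) auto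
  then show ?case
    using insert x w ip_linear_left[of x "u k" "\<Sum>k\<in>K. c k *\<^sub>R u k" w "c k" 1] by simp
qed

lemma theta_reeb_horizontal:
  assumes x: "x \<in> U" and v: "v \<in> H x" and j: "j \<in> {1,2,3}"
  shows "theta (4*n+j) x \<bullet> v = 0"
proof -
  have eta_X: "eta j x \<bullet> X a x = (if a = 4*n+j then 1 else 0)" if a: "a \<in> {1..4*n+3}" for a
  proof (cases "a \<le> 4*n")
    case True
    then show ?thesis using X_horiz[OF x] a j by (auto simp: horiz_def)
  next
    case False
    then obtain i where "i \<in> {1,2,3}" "a = 4*n+i"
      using a by (intro that[of "a - 4*n"]) auto
    then show ?thesis using eta_reeb[OF x j] by auto
  qed
  have "0 = eta j x \<bullet> v"
    using v j by (auto simp: horiz_def)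
  also have "\<dots> = (\<Sum>a\<in>{1..4*n+3}. (theta a x \<bullet> v) * (eta j x \<bullet> X a x))"
    by (subst frame_expansion[OF x, of v, symmetric]) (simp add: inner_sum_right)
  also have "\<dots> = theta (4*n+j) x \<bullet> v"
    using j by (auto simp: eta_X if_distrib cong: if_cong)
  finally show ?thesis by simp
qed

lemma horizontal_frame_expansion:
  assumes x: "x \<in> U" and v: "v \<in> H x"
  shows "(\<Sum>\<alpha>\<in>{1..4*n}. (theta \<alpha> x \<bullet> v) *\<^sub>R X \<alpha> x) = v"
proof -
  have "theta a x \<bullet> v = 0" if a: "a \<in> {1..4*n+3} - {1..4*n}" for a
  proof -
    obtain j where "j \<in> {1,2,3}" "a = 4*n+j"
      using a by (intro that[of "a - 4*n"]) auto
    then show ?thesis using theta_reeb_horizontal[OF x v] by simp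
  qed
  then have "(\<Sum>\<alpha>\<in>{1..4*n}. (theta \<alpha> x \<bullet> v) *\<^sub>R X \<alpha> x)
      = (\<Sum>a\<in>{1..4*n+3}. (theta a x \<bullet> v) *\<^sub>R X a x)"
    by (intro sum.mono_neutral_left) auto
  then show ?thesis
    using frame_expansion[OF x, of v] by simp
qed

lemma ip_X_right:
  assumes x: "x \<in> U" and v: "v \<in> H x" and \<beta>: "\<beta> \<in> {1..4*n}"
  shows "ip x v (X \<beta> x) = theta \<beta> x \<bullet> v"
proof -
  have "ip x v (X \<beta> x) = ip x (\<Sum>\<alpha>\<in>{1..4*n}. (theta \<alpha> x \<bullet> v) *\<^sub>R X \<alpha> x) (X \<beta> x)"
    using horizontal_frame_expansion[OF x v] by simp
  also have "\<dots> = (\<Sum>\<alpha>\<in>{1..4*n}. (theta \<alpha> x \<bullet> v) * ip x (X \<alpha> x) (X \<beta> x))"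
    using x \<beta> X_horiz by (intro ip_sum_scaleR_left) auto
  also have "\<dots> = theta \<beta> x \<bullet> v"
    using x \<beta> by (simp add: X_orthonormal if_distrib cong: if_cong)
  finally show ?thesis .
qed

lemma horizontal_parseval:
  assumes x: "x \<in> U" and u: "u \<in> H x" and w: "w \<in> H x"
  shows "ip x u w = (\<Sum>\<alpha>\<in>{1..4*n}. ip x u (X \<alpha> x) * ip x w (X \<alpha> x))"
proof -
  have "ip x w u = ip x (\<Sum>\<alpha>\<in>{1..4*n}. (theta \<alpha> x \<bullet> w) *\<^sub>R X \<alpha> x) u"
    using horizontal_frame_expansion[OF x w] by simp
  also have "\<dots> = (\<Sum>\<alpha>\<in>{1..4*n}. (theta \<alpha> x \<bullet> w) * ip x (X \<alpha> x) u)"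
    using x u X_horiz by (intro ip_sum_scaleR_left) auto
  also have "\<dots> = (\<Sum>\<alpha>\<in>{1..4*n}. ip x u (X \<alpha> x) * ip x w (X \<alpha> x))"
    using x u w X_horiz by (intro sum.cong) (auto simp: ip_X_right ip_sym)
  finally show ?thesis
    using ip_sym[OF x u w] by simp
qed

lemma hgrad_eq:
  assumes x: "x \<in> U" and f: "f differentiable (at x)"
  shows "hgrad eta ip f x = (\<Sum>\<alpha>\<in>{1..4*n}. vf_apply (X \<alpha>) f x *\<^sub>R X \<alpha> x)"
proof -
  define G where "G = (\<Sum>\<alpha>\<in>{1..4*n}. vf_apply (X \<alpha>) f x *\<^sub>R X \<alpha> x)"
  define Df where "Df = frechet_derivative f (at x)"
  have G: "G \<in> H x"
    unfolding G_def using x X_horiz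
    by (intro subspace_sum[OF subspace_horiz] subspace_scale[OF subspace_horiz]) auto
  have G_represents_Df: "ip x G v = Df v" if v: "v \<in> H x" for v
  proof -
    have "ip x G v = (\<Sum>\<alpha>\<in>{1..4*n}. vf_apply (X \<alpha>) f x * ip x (X \<alpha> x) v)"
      unfolding G_def using x v X_horiz by (intro ip_sum_scaleR_left) auto
    also have "\<dots> = (\<Sum>\<alpha>\<in>{1..4*n}. (theta \<alpha> x \<bullet> v) * Df (X \<alpha> x))"
    proof (intro sum.cong refl)
      fix \<alpha> assume \<alpha>: "\<alpha> \<in> {1..4*n}"
      have "ip x (X \<alpha> x) v = theta \<alpha> x \<bullet> v"
        using ip_sym[OF x X_horiz[OF x \<alpha>] v] ip_X_right[OF x v \<alpha>] by simp
      then show "vf_apply (X \<alpha>) f x * ip x (X \<alpha> x) v = (theta \<alpha> x \<bullet> v) * Df (X \<alpha> x)"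
        by (simp add: vf_apply_def Df_def)
    qed
    also have "\<dots> = Df (\<Sum>\<alpha>\<in>{1..4*n}. (theta \<alpha> x \<bullet> v) *\<^sub>R X \<alpha> x)"
      using linear_frechet_derivative[OF f] by (simp add: Df_def linear_sum linear_scale)
    finally show ?thesis
      using horizontal_frame_expansion[OF x v] by simp
  qed
  have unique: "w = G" if w: "w \<in> H x" "\<forall>v\<in>H x. ip x w v = Df v" for w
  proof (rule ccontr)
    assume "w \<noteq> G"
    moreover have "w - G \<in> H x"
      using w G by (simp add: subspace_diff[OF subspace_horiz])
    ultimately have "0 < ip x (w - G) (w - G)"
      using ip_pos[OF x] by simp
    also have "\<dots> = 0"
      using x w G \<open>w - G \<in> H x\<close> by (simp add: ip_diff_left G_represents_Df)
    finally show False by simp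
  qed
  show ?thesis
    unfolding hgrad_def G_def[symmetric] Df_def[symmetric]
  proof (rule the_equality)
    show "G \<in> H x \<and> (\<forall>v\<in>H x. ip x G v = Df v)"
      using G G_represents_Df by blast
  qed (use unique in blast)
qed

lemma ip_I_skew:
  assumes "x \<in> U" "i \<in> {1,2,3}" "v \<in> H x" "w \<in> H x"
  shows "ip x (I i x v) w = - ip x (I i x w) v"
  using d_eta_eq_ip_I[OF assms] d_eta_eq_ip_I[OF assms(1,2,4,3)] by (simp add: d_form_def)

lemma I_minus: "x \<in> U \<Longrightarrow> i \<in> {1,2,3} \<Longrightarrow> v \<in> H x \<Longrightarrow> I i x (- v) = - I i x v"
  using I_linear[of x i v v "-1" 0] by simp

lemma ip_I_I:
  assumes x: "x \<in> U" and i: "i \<in> {1,2,3}" and u: "u \<in> H x" and w: "w \<in> H x"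
  shows "ip x (I i x u) (I i x w) = ip x u w"
proof -
  have "ip x (I i x u) (I i x w) = - ip x (I i x (I i x w)) u"
    using ip_I_skew[OF x i u I_horiz[OF x i w]] .
  also have "\<dots> = ip x w u"
    using ip_scaleR_left[OF x w u, of "-1"] by (simp add: I_I[OF x i w])
  finally show ?thesis
    using ip_sym[OF x w u] by simp
qed

lemma ip_I_self: "x \<in> U \<Longrightarrow> i \<in> {1,2,3} \<Longrightarrow> v \<in> H x \<Longrightarrow> ip x v (I i x v) = 0"
  using ip_I_skew[of x i v v] ip_sym[of x v "I i x v"] I_horiz[of x i v] by simp

lemma I_1_2: assumes x: "x \<in> U" and v: "v \<in> H x" shows "I 1 x (I 2 x v) = I 3 x v"
proof -
  have "- I 3 x v \<in> H x"
    using subspace_neg[OF subspace_horiz I_horiz[OF x _ v, of 3]] by simp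
  moreover have "I 3 x (- I 3 x v) = v"
    using I_minus[OF x _ I_horiz[OF x _ v], of 3] I_I[OF x _ v] by simp
  ultimately show ?thesis
    using I_1_2_3[OF x, of "- I 3 x v"] by simp
qed

lemma ip_I_I_same:
  assumes x: "x \<in> U" and i: "i \<in> {1,2,3}" and j: "j \<in> {1,2,3}" and v: "v \<in> H x"
  shows "ip x (I i x v) (I j x v) = (if i = j then ip x v v else 0)"
proof -
  have Iv: "I k x v \<in> H x" if "k \<in> {1,2,3}" for k
    using I_horiz[OF x that v] .
  (* Via I_1 I_2 = I_3, each mixed product becomes one of the form ip w (I_k w) = 0. *)
  have "ip x (I 1 x v) (I 2 x v) = - ip x (I 3 x v) v"
    using ip_I_skew[OF x _ v Iv, of 1 2] I_1_2[OF x v] by simp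
  also have "\<dots> = 0"
    using ip_sym[OF x Iv v, of 3] ip_I_self[OF x _ v, of 3] by simp
  finally have 12: "ip x (I 1 x v) (I 2 x v) = 0" .
  have 13: "ip x (I 1 x v) (I 3 x v) = 0"
    using ip_I_I[OF x _ v Iv, of 1 2] ip_I_self[OF x _ v, of 2] I_1_2[OF x v] by simp
  have 23: "ip x (I 2 x v) (I 3 x v) = 0"
    using ip_I_self[OF x _ Iv, of 1 2] I_1_2[OF x v] by simp
  show ?thesis
    using i j 12 13 23 ip_sym[OF x Iv[of 1] Iv[of 2]] ip_sym[OF x Iv[of 1] Iv[of 3]]
      ip_sym[OF x Iv[of 2] Iv[of 3]] ip_I_I[OF x _ v v] by auto
qed

lemma eta_lie_bracket:
  assumes x: "x \<in> U" and i: "i \<in> {1,2,3}" and \<alpha>: "\<alpha> \<in> {1..4*n}" and \<beta>: "\<beta> \<in> {1..4*n}"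
  shows "eta i x \<bullet> lie_bracket (X \<alpha>) (X \<beta>) x = - 2 * ip x (I i x (X \<alpha> x)) (X \<beta> x)"
proof -
  define De where "De = frechet_derivative (eta i) (at x)"
  define DX where "DX a = frechet_derivative (X a) (at x)" for a
  have eta_X_derivative: "eta i x \<bullet> DX a h + De h \<bullet> X a x = 0" if a: "a \<in> {1..4*n}" for a h
  proof -
    have deriv: "((\<lambda>y. eta i y \<bullet> X a y) has_derivative
        (\<lambda>h. eta i x \<bullet> DX a h + De h \<bullet> X a x)) (at x)"
      unfolding De_def DX_def using a x i
      by (intro has_derivative_inner frechet_derivative_works[THEN iffD1]
          eta_differentiable X_differentiable) auto
    have "eta i y \<bullet> X a y = 0" if "y \<in> U" for y
      using X_horiz[OF that a] i by (auto simp: horiz_def)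
    from has_derivative_eq_0_if_constant_on_open[OF open_U x this deriv]
    show ?thesis .
  qed
  have "2 * ip x (I i x (X \<alpha> x)) (X \<beta> x) = De (X \<alpha> x) \<bullet> X \<beta> x - De (X \<beta> x) \<bullet> X \<alpha> x"
    using d_eta_eq_ip_I[OF x i X_horiz[OF x \<alpha>] X_horiz[OF x \<beta>]] by (simp add: d_form_def De_def)
  also have "\<dots> = - (eta i x \<bullet> lie_bracket (X \<alpha>) (X \<beta>) x)"
    using eta_X_derivative[OF \<alpha>, of "X \<beta> x"] eta_X_derivative[OF \<beta>, of "X \<alpha> x"]
    by (simp add: lie_bracket_def DX_def inner_diff_right)
  finally show ?thesis by simp
qed

lemma popp_B_eq:
  assumes x: "x \<in> U" and i: "i \<in> {1,2,3}" and j: "j \<in> {1,2,3}"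
  shows "popp_B n eta X x i j = (if i = j then 16 * real n else 0)"
proof -
  have IX: "I k x (X \<alpha> x) \<in> H x" if "k \<in> {1,2,3}" "\<alpha> \<in> {1..4*n}" for k \<alpha>
    using I_horiz[OF x that(1) X_horiz[OF x that(2)]] .
  have "popp_B n eta X x i j = (\<Sum>\<alpha>\<in>{1..4*n}. \<Sum>\<beta>\<in>{1..4*n}.
      4 * (ip x (I i x (X \<alpha> x)) (X \<beta> x) * ip x (I j x (X \<alpha> x)) (X \<beta> x)))"
    unfolding popp_B_def by (intro sum.cong refl) (simp add: eta_lie_bracket[OF x i] eta_lie_bracket[OF x j])
  also have "\<dots> = (\<Sum>\<alpha>\<in>{1..4*n}. 4 * ip x (I i x (X \<alpha> x)) (I j x (X \<alpha> x)))"
    by (intro sum.cong refl) (simp add: horizontal_parseval[OF x IX[OF i] IX[OF j]] sum_distrib_left)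
  also have "\<dots> = (\<Sum>\<alpha>\<in>{1..4*n}. if i = j then 4 else 0)"
    by (intro sum.cong refl) (simp add: ip_I_I_same[OF x i j X_horiz[OF x]] X_orthonormal[OF x])
  finally show ?thesis by simp
qed

lemma popp_density_eq:
  "x \<in> U \<Longrightarrow> popp_density n iota theta eta X x
     = 1 / sqrt ((16 * real n) ^ 3) * \<bar>det (coframe_matrix x)\<bar>"
  by (simp add: popp_density_def det3_def popp_B_eq power3_eq_cube coframe_matrix_def)

end

theorem lemma4p2:
  fixes n :: nat
    and U :: "(real^'m::finite) set"
    and iota :: "'m \<Rightarrow> nat"
    and eta :: "nat \<Rightarrow> real^'m \<Rightarrow> real^'m"
    and ip :: "real^'m \<Rightarrow> real^'m \<Rightarrow> real^'m \<Rightarrow> real"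
    and I :: "nat \<Rightarrow> real^'m \<Rightarrow> real^'m \<Rightarrow> real^'m"
    and X :: "nat \<Rightarrow> real^'m \<Rightarrow> real^'m"
    and theta :: "nat \<Rightarrow> real^'m \<Rightarrow> real^'m"
    and f :: "real^'m \<Rightarrow> real"
  assumes n_pos: "n \<ge> 1"
    and dim: "CARD('m) = 4*n+3"
    and iota: "bij_betw iota UNIV {1..4*n+3}"
    and U_open: "open U"
    (* smoothness of the local data *)
    and eta_smooth: "\<forall>i\<in>{1,2,3}. smooth_on U (eta i)"
    and X_smooth: "\<forall>a\<in>{1..4*n+3}. smooth_on U (X a)"
    and theta_smooth: "\<forall>a\<in>{1..4*n+3}. smooth_on U (theta a)"
    and f_smooth: "smooth_on U f"
    (* ip x is an inner product on the fibre H_x *)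
    and ip_bilin: "\<forall>x\<in>U. \<forall>u\<in>horiz eta x. \<forall>v\<in>horiz eta x. \<forall>w\<in>horiz eta x. \<forall>a b::real.
           ip x (a *\<^sub>R u + b *\<^sub>R v) w = a * ip x u w + b * ip x v w"
    and ip_sym: "\<forall>x\<in>U. \<forall>v\<in>horiz eta x. \<forall>w\<in>horiz eta x. ip x v w = ip x w v"
    and ip_pos: "\<forall>x\<in>U. \<forall>v\<in>horiz eta x. v \<noteq> 0 \<longrightarrow> ip x v v > 0"
    (* almost complex structures I_1, I_2, I_3 on H with quaternion relations *)
    and I_lin: "\<forall>x\<in>U. \<forall>i\<in>{1,2,3}. \<forall>v\<in>horiz eta x. \<forall>w\<in>horiz eta x. \<forall>a b::real.
           I i x (a *\<^sub>R v + b *\<^sub>R w) = a *\<^sub>R I i x v + b *\<^sub>R I i x w"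
    and I_horiz: "\<forall>x\<in>U. \<forall>i\<in>{1,2,3}. \<forall>v\<in>horiz eta x. I i x v \<in> horiz eta x"
    and I_sq: "\<forall>x\<in>U. \<forall>i\<in>{1,2,3}. \<forall>v\<in>horiz eta x. I i x (I i x v) = - v"
    and I_123: "\<forall>x\<in>U. \<forall>v\<in>horiz eta x. I 1 x (I 2 x (I 3 x v)) = - v"
    (* 2 <I_i X, Y> = d eta_i (X, Y) for horizontal X, Y *)
    and qc_compat: "\<forall>x\<in>U. \<forall>i\<in>{1,2,3}. \<forall>v\<in>horiz eta x. \<forall>w\<in>horiz eta x.
           2 * ip x (I i x v) w = d_form (eta i) x v w"
    (* X_{4n+i} = V_i are the Reeb vector fields *)
    and reeb_dual: "\<forall>x\<in>U. \<forall>i\<in>{1,2,3}. \<forall>j\<in>{1,2,3}.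
           eta i x \<bullet> X (4*n+j) x = (if i = j then 1 else 0)"
    and reeb_skew: "\<forall>x\<in>U. \<forall>i\<in>{1,2,3}. \<forall>j\<in>{1,2,3}. \<forall>v\<in>horiz eta x.
           d_form (eta j) x (X (4*n+i) x) v = - d_form (eta i) x (X (4*n+j) x) v"
    (* X_1..X_{4n} is an Sp(n)Sp(1)-frame of H *)
    and X_horiz: "\<forall>x\<in>U. \<forall>\<alpha>\<in>{1..4*n}. X \<alpha> x \<in> horiz eta x"
    and X_orth: "\<forall>x\<in>U. \<forall>\<alpha>\<in>{1..4*n}. \<forall>\<beta>\<in>{1..4*n}.
           ip x (X \<alpha> x) (X \<beta> x) = (if \<alpha> = \<beta> then 1 else 0)"
    and X_sp: "\<forall>x\<in>U. \<forall>k<n. \<forall>i\<in>{1,2,3}. I i x (X (4*k+1) x) = X (4*k+i+1) x"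
    (* theta_1..theta_{4n+3} is the dual coframe *)
    and theta_dual: "\<forall>x\<in>U. \<forall>a\<in>{1..4*n+3}. \<forall>b\<in>{1..4*n+3}.
           theta a x \<bullet> X b x = (if a = b then 1 else 0)"
  shows "\<forall>x\<in>U.
    sublaplacian (popp_density n iota theta eta X) eta ip f x =
      - (\<Sum>\<alpha>\<in>{1..4*n}.
           vf_apply (X \<alpha>) (vf_apply (X \<alpha>) f) x
         + (\<Sum>a\<in>{1..4*n+3}. theta a x \<bullet> lie_bracket (X a) (X \<alpha>) x) * vf_apply (X \<alpha>) f x)"
proof -
  interpret qc_frame n U iota X theta eta ip I
  proof unfold_locales
    show "X a differentiable (at x)" if "a \<in> {1..4*n+3}" "x \<in> U" for a x
      using X_smooth that smooth_on_imp_differentiable by blast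
    show "theta a differentiable (at x)" if "a \<in> {1..4*n+3}" "x \<in> U" for a x
      using theta_smooth that smooth_on_imp_differentiable by blast
    show "eta i differentiable (at x)" if "i \<in> {1,2,3}" "x \<in> U" for i x
      using eta_smooth that smooth_on_imp_differentiable by blast
  qed (rule assms[rule_format]; assumption)+
  show ?thesis
  proof
    fix x assume x: "x \<in> U"
    have f: "f differentiable (at y)" if "y \<in> U" for y
      using smooth_on_imp_differentiable[OF f_smooth that] .
    have Xf: "vf_apply (X \<alpha>) f differentiable (at x)" if "\<alpha> \<in> {1..4*n}" for \<alpha>
      using that by (intro vf_apply_differentiable[OF U_open x _ f]
          smooth_on_imp_frechet_derivative_differentiable[OF f_smooth x] X_differentiable[OF _ x]) auto
    have "divergence (popp_density n iota theta eta X) (hgrad eta ip f) x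
      = (\<Sum>\<alpha>\<in>{1..4*n}. vf_apply (X \<alpha>) (vf_apply (X \<alpha>) f) x
         + (\<Sum>a\<in>{1..4*n+3}. theta a x \<bullet> lie_bracket (X a) (X \<alpha>) x) * vf_apply (X \<alpha>) f x)"
      using n_pos by (intro divergence_frame_sum[OF x _ Xf hgrad_eq[OF _ f] _ popp_density_eq]) auto
    then show "sublaplacian (popp_density n iota theta eta X) eta ip f x = - \<dots>"
      by (simp add: sublaplacian_def)
  qed
qed

end
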